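(* Let $\mathcal{G}=(\mathcal{V},\mathcal{E})$ be a connected time-invariant undirected graph on $\mathcal{V}=\{1,\dots,n\}$ with fixed weights $w_{ij}$ satisfying the standing weight conventions. Suppose each agent $i$ has initial state $\mu_i(0)\in\mathfrak{U}_2(\mathbb{R})$ and updates by $\mu_i(t+1)=\operatorname{argmin}_{\eta\in\mathfrak{U}_2(\mathbb{R})}\sum_{j\in\mathcal{N}_i}w_{ij}\ell_2(\eta,\mu_j(t))^2$. Then there exists $\mu^\ast\in\mathfrak{U}_2(\mathbb{R})$ such that for every $i\in\mathcal{V}$, $\ell_2(\mu_i(t),\mu^\ast)\to0$ at an exponential rate as $t\to\infty$.
   Context: $\mathfrak{U}_2(\mathbb{R})$ is the set of Borel probability measures on $\mathbb{R}$ with finite second moment; $\ell_2$ is the 2-Wasserstein distance $\ell_2(\mu,\nu)=\big(\inf_{\gamma\in\Gamma(\mu,\nu)}\int|x-y|^2d\gamma\big)^{1/2}$ over couplings. $\mathcal{N}_i=\{j:(i,j)\in\mathcal{E}\}$ contains $i$; $w_{ij}>0$ iff $j\in\mathcal{N}_i$, $w_{ij}=0$ otherwise, $\sum_jw_{ij}=1$, $w_{ii}>0$. Exponential rate means there exist $C>0$, $\rho\in(0,1)$ with $\ell_2(\mu_i(t),\mu^\ast)\le C\rho^t$ for all $t$. *)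

theory Defs
  imports "HOL-Probability.Probability"
begin

definition P2 :: "real measure set" where
  "P2 = {\<mu>. prob_space \<mu> \<and> sets \<mu> = sets (borel :: real measure) \<and>
              integrable \<mu> (\<lambda>x. x ^ 2)}"

definition couplings :: "real measure \<Rightarrow> real measure \<Rightarrow> (real \<times> real) measure set" where
  "couplings \<mu> \<nu> = {\<gamma>. prob_space \<gamma> \<and> sets \<gamma> = sets (borel \<Otimes>\<^sub>M borel) \<and>
                       distr \<gamma> borel fst = \<mu> \<and> distr \<gamma> borel snd = \<nu>}"

definition W2sq :: "real measure \<Rightarrow> real measure \<Rightarrow> ennreal" where
  "W2sq \<mu> \<nu> = (INF \<gamma>\<in>couplings \<mu> \<nu>. \<integral>\<^sup>+ z. ennreal ((fst z - snd z) ^ 2) \<partial>\<gamma>)"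

definition wass2 :: "real measure \<Rightarrow> real measure \<Rightarrow> real" where
  "wass2 \<mu> \<nu> = sqrt (enn2real (W2sq \<mu> \<nu>))"

end

theory Submission
  imports Defs
begin

(*
  On the real line the 2-Wasserstein distance is the L2 distance between quantile
  functions: realising every measure mu by its quantile function Q(mu) on the uniform space
  (0,1), one has W2(mu,nu)^2 = integral of (Q(mu) - Q(nu))^2.  Consequently the barycentric
  update is linear on quantiles: the quantile function of a weighted barycenter is almost
  everywhere the weighted average of the neighbours' quantile functions.  For almost every
  level u the numbers Q(mu_i(t))(u) therefore follow the linear consensus iteration
  x(t+1) = W x(t), which contracts the spread max - min geometrically, because every agent
  reaches every other one by walks of a fixed length N carrying weight at least delta^N.
  The pointwise limits L(u) are the quantiles of the consensus measure, and integrating the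
  pointwise geometric bound gives the exponential rate in W2.
*)

section \<open>Quantile functions on the uniform space\<close>

definition unif01 :: "real measure" where
  "unif01 = restrict_space lborel {0<..<1}"

definition quantile :: "real measure \<Rightarrow> real \<Rightarrow> real" where
  "quantile \<mu> u = Inf {x. u \<le> cdf \<mu> x}"

lemma space_unif01 [simp]: "space unif01 = {0<..<1}"
  by (simp add: unif01_def)

lemma prob_space_unif01: "prob_space unif01"
  unfolding unif01_def
  by (auto simp add: emeasure_restrict_space space_restrict_space intro!: prob_spaceI)

lemma P2_real_distribution: "\<mu> \<in> P2 \<Longrightarrow> real_distribution \<mu>"
  unfolding P2_def real_distribution_def real_distribution_axioms_def by auto

lemma P2_cdf_distribution: "\<mu> \<in> P2 \<Longrightarrow> cdf_distribution \<mu>"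
  unfolding cdf_distribution_def by (rule P2_real_distribution)

lemma measurable_quantile [measurable]: "\<mu> \<in> P2 \<Longrightarrow> quantile \<mu> \<in> borel_measurable unif01"
proof -
  assume "\<mu> \<in> P2"
  then interpret cdf_distribution \<mu> by (rule P2_cdf_distribution)
  have "quantile \<mu> \<in> borel_measurable (restrict_space borel {0<..<1})"
    unfolding quantile_def[abs_def] by (rule measurable_CI)
  then show ?thesis
    by (simp add: unif01_def measurable_cong_sets sets_restrict_space)
qed

lemma distr_quantile: "\<mu> \<in> P2 \<Longrightarrow> distr unif01 borel (quantile \<mu>) = \<mu>"
proof -
  assume "\<mu> \<in> P2"
  then interpret cdf_distribution \<mu> by (rule P2_cdf_distribution)
  show ?thesis unfolding unif01_def quantile_def[abs_def] by (rule distr_I_eq_M)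
qed

lemma quantile_le_iff:
  assumes "\<mu> \<in> P2" "0 < u" "u < 1"
  shows "quantile \<mu> u \<le> x \<longleftrightarrow> u \<le> cdf \<mu> x"
proof -
  interpret cdf_distribution \<mu> using assms(1) by (rule P2_cdf_distribution)
  show ?thesis unfolding quantile_def using assms(2,3) by (intro pseudoinverse[symmetric])
qed

section \<open>The crossing representation of the squared distance\<close>

text \<open>
  (x - y)^2 is the Lebesgue measure of the pairs s < t which the segment between x and y
  crosses, counted twice.  Integrated against a coupling, this turns the transport cost into
  an integral of probabilities of crossing events, which are controlled by the marginals alone.
\<close>
definition crossing :: "real \<Rightarrow> real \<Rightarrow> real \<Rightarrow> real \<Rightarrow> ennreal" where
  "crossing x y s t =
     (if s < t \<and> x \<le> s \<and> t < y then 2 else 0) + (if s < t \<and> y \<le> s \<and> t < x then 2 else 0)"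

lemma crossing_measurable [measurable]:
  assumes [measurable]: "X \<in> borel_measurable M" "Y \<in> borel_measurable M"
    "S \<in> borel_measurable M" "T \<in> borel_measurable M"
  shows "(\<lambda>z. crossing (X z) (Y z) (S z) (T z)) \<in> borel_measurable M"
  unfolding crossing_def by measurable

lemma upward_crossing_integral:
  fixes x y :: real
  assumes "x \<le> y"
  shows "(\<integral>\<^sup>+s. \<integral>\<^sup>+t. (if s < t \<and> x \<le> s \<and> t < y then 2 else 0) \<partial>lborel \<partial>lborel) = ennreal ((y - x)^2)"
proof -
  have inner: "(\<integral>\<^sup>+t. (if s < t \<and> x \<le> s \<and> t < y then 2 else 0) \<partial>lborel)
      = ennreal (2 * (y - s)) * indicator {x..y} s" for s
  proof (cases "x \<le> s \<and> s \<le> y")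
    case True
    have "(\<integral>\<^sup>+t. (if s < t \<and> x \<le> s \<and> t < y then 2 else 0) \<partial>lborel)
        = (\<integral>\<^sup>+t. 2 * indicator {s<..<y} t \<partial>lborel)"
      using True by (intro nn_integral_cong) (auto simp: indicator_def)
    also have "\<dots> = ennreal (2 * (y - s))"
      using True ennreal_mult'[of 2 "y - s"] by (subst nn_integral_cmult_indicator) auto
    finally show ?thesis using True by simp
  next
    case False
    then have "(\<lambda>t. (if s < t \<and> x \<le> s \<and> t < y then 2 else 0::ennreal)) = (\<lambda>t. 0)"
      by (auto simp: fun_eq_iff)
    then show ?thesis using False by (auto simp: indicator_def)
  qed
  have "(\<integral>\<^sup>+s. ennreal (2 * (y - s)) * indicator {x..y} s \<partial>lborel)
      = (\<lambda>s. - ((y - s)^2)) y - (\<lambda>s. - ((y - s)^2)) x"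
    by (rule nn_integral_FTC_Icc) (auto intro!: derivative_eq_intros simp: assms)
  then show ?thesis by (simp add: inner)
qed

lemma crossing_integral:
  fixes x y :: real
  shows "(\<integral>\<^sup>+s. \<integral>\<^sup>+t. crossing x y s t \<partial>lborel \<partial>lborel) = ennreal ((x - y)^2)"
proof (cases "x \<le> y")
  case True
  then have "crossing x y s t = (if s < t \<and> x \<le> s \<and> t < y then 2 else 0)" for s t
    by (auto simp: crossing_def)
  then show ?thesis using upward_crossing_integral[OF True] by (simp add: power2_commute)
next
  case False
  then have "crossing x y s t = (if s < t \<and> y \<le> s \<and> t < x then 2 else 0)" for s t
    by (auto simp: crossing_def)
  then show ?thesis using upward_crossing_integral[of y x] False by simp
qed

lemma expected_square_crossing:
  assumes "sigma_finite_measure M"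
    and [measurable]: "X \<in> borel_measurable M" "Y \<in> borel_measurable M"
  shows "(\<integral>\<^sup>+\<omega>. ennreal ((X \<omega> - Y \<omega>)^2) \<partial>M)
       = (\<integral>\<^sup>+s. \<integral>\<^sup>+t. \<integral>\<^sup>+\<omega>. crossing (X \<omega>) (Y \<omega>) s t \<partial>M \<partial>lborel \<partial>lborel)"
proof -
  interpret pair_sigma_finite M lborel
    using assms(1) by (simp add: pair_sigma_finite_def lborel.sigma_finite_measure_axioms)
  have "(\<integral>\<^sup>+\<omega>. ennreal ((X \<omega> - Y \<omega>)^2) \<partial>M)
      = (\<integral>\<^sup>+\<omega>. \<integral>\<^sup>+s. \<integral>\<^sup>+t. crossing (X \<omega>) (Y \<omega>) s t \<partial>lborel \<partial>lborel \<partial>M)"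
    by (simp add: crossing_integral)
  also have "\<dots> = (\<integral>\<^sup>+s. \<integral>\<^sup>+\<omega>. \<integral>\<^sup>+t. crossing (X \<omega>) (Y \<omega>) s t \<partial>lborel \<partial>M \<partial>lborel)"
  proof (rule Fubini'[symmetric])
    show "(\<lambda>(\<omega>, s). \<integral>\<^sup>+t. crossing (X \<omega>) (Y \<omega>) s t \<partial>lborel) \<in> borel_measurable (M \<Otimes>\<^sub>M lborel)"
      by measurable
  qed
  also have "\<dots> = (\<integral>\<^sup>+s. \<integral>\<^sup>+t. \<integral>\<^sup>+\<omega>. crossing (X \<omega>) (Y \<omega>) s t \<partial>M \<partial>lborel \<partial>lborel)"
  proof (intro nn_integral_cong Fubini'[symmetric])
    show "(\<lambda>(\<omega>, t). crossing (X \<omega>) (Y \<omega>) s t) \<in> borel_measurable (M \<Otimes>\<^sub>M lborel)" for s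
      by measurable
  qed
  finally show ?thesis .
qed

lemma crossing_mass:
  assumes [measurable]: "X \<in> borel_measurable M" "Y \<in> borel_measurable M"
  shows "(\<integral>\<^sup>+\<omega>. crossing (X \<omega>) (Y \<omega>) s t \<partial>M)
     = (if s < t then 2 else 0) * emeasure M {\<omega>\<in>space M. X \<omega> \<le> s \<and> t < Y \<omega>}
     + (if s < t then 2 else 0) * emeasure M {\<omega>\<in>space M. Y \<omega> \<le> s \<and> t < X \<omega>}"
proof -
  let ?c = "(if s < t then 2 else 0) :: ennreal"
  have up [measurable]: "{\<omega>\<in>space M. X \<omega> \<le> s \<and> t < Y \<omega>} \<in> sets M" by measurable
  have down [measurable]: "{\<omega>\<in>space M. Y \<omega> \<le> s \<and> t < X \<omega>} \<in> sets M" by measurable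
  have "(\<integral>\<^sup>+\<omega>. crossing (X \<omega>) (Y \<omega>) s t \<partial>M)
      = (\<integral>\<^sup>+\<omega>. ?c * indicator {\<omega>\<in>space M. X \<omega> \<le> s \<and> t < Y \<omega>} \<omega>
              + ?c * indicator {\<omega>\<in>space M. Y \<omega> \<le> s \<and> t < X \<omega>} \<omega> \<partial>M)"
    by (intro nn_integral_cong) (auto simp: crossing_def indicator_def)
  also have "\<dots> = (\<integral>\<^sup>+\<omega>. ?c * indicator {\<omega>\<in>space M. X \<omega> \<le> s \<and> t < Y \<omega>} \<omega> \<partial>M)
         + (\<integral>\<^sup>+\<omega>. ?c * indicator {\<omega>\<in>space M. Y \<omega> \<le> s \<and> t < X \<omega>} \<omega> \<partial>M)"
    by (rule nn_integral_add) measurable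
  finally show ?thesis
    by (simp only: nn_integral_cmult_indicator[OF up] nn_integral_cmult_indicator[OF down])
qed

lemma cdf_of_distr:
  assumes [measurable]: "X \<in> borel_measurable M" and "distr M borel X = \<mu>"
  shows "cdf \<mu> s = measure M {\<omega>\<in>space M. X \<omega> \<le> s}"
proof -
  have "cdf \<mu> s = measure (distr M borel X) {..s}" using assms by (simp add: cdf_def)
  also have "\<dots> = measure M (X -` {..s} \<inter> space M)" by (rule measure_distr) auto
  finally show ?thesis by (simp add: vimage_def Int_def conj_commute)
qed

lemma coupling_crossing_lower:
  assumes "prob_space M" and [measurable]: "X \<in> borel_measurable M" "Y \<in> borel_measurable M"
    and "distr M borel X = \<mu>" "distr M borel Y = \<nu>"
  shows "ennreal (cdf \<mu> s - cdf \<nu> t) \<le> emeasure M {\<omega>\<in>space M. X \<omega> \<le> s \<and> t < Y \<omega>}"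
proof -
  interpret prob_space M by fact
  have "measure M {\<omega>\<in>space M. X \<omega> \<le> s}
     \<le> measure M ({\<omega>\<in>space M. X \<omega> \<le> s \<and> t < Y \<omega>} \<union> {\<omega>\<in>space M. Y \<omega> \<le> t})"
    by (intro finite_measure_mono) auto
  also have "\<dots> \<le> measure M {\<omega>\<in>space M. X \<omega> \<le> s \<and> t < Y \<omega>} + measure M {\<omega>\<in>space M. Y \<omega> \<le> t}"
    by (intro measure_Un_le) auto
  finally have "cdf \<mu> s - cdf \<nu> t \<le> measure M {\<omega>\<in>space M. X \<omega> \<le> s \<and> t < Y \<omega>}"
    using cdf_of_distr[of X M \<mu> s] cdf_of_distr[of Y M \<nu> t] assms by simp
  then show ?thesis by (simp add: emeasure_eq_measure ennreal_leI)
qed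

lemma quantile_crossing_upper:
  assumes "\<mu> \<in> P2" "\<nu> \<in> P2"
  shows "emeasure unif01 {u\<in>space unif01. quantile \<mu> u \<le> s \<and> t < quantile \<nu> u}
           \<le> ennreal (cdf \<mu> s - cdf \<nu> t)"
proof -
  have "{u\<in>space unif01. quantile \<mu> u \<le> s \<and> t < quantile \<nu> u}
      = {0<..<1} \<inter> {cdf \<nu> t<..cdf \<mu> s}"
  proof (intro set_eqI iffI)
    fix u assume "u \<in> {u\<in>space unif01. quantile \<mu> u \<le> s \<and> t < quantile \<nu> u}"
    then show "u \<in> {0<..<1} \<inter> {cdf \<nu> t<..cdf \<mu> s}"
      using quantile_le_iff[OF assms(1), of u s] quantile_le_iff[OF assms(2), of u t] by auto
  next
    fix u assume "u \<in> {0<..<1} \<inter> {cdf \<nu> t<..cdf \<mu> s}"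
    then show "u \<in> {u\<in>space unif01. quantile \<mu> u \<le> s \<and> t < quantile \<nu> u}"
      using quantile_le_iff[OF assms(1), of u s] quantile_le_iff[OF assms(2), of u t] by auto
  qed
  then have "emeasure unif01 {u\<in>space unif01. quantile \<mu> u \<le> s \<and> t < quantile \<nu> u}
      = emeasure lborel ({0<..<1} \<inter> {cdf \<nu> t<..cdf \<mu> s})"
    unfolding unif01_def by (simp add: emeasure_restrict_space)
  also have "\<dots> \<le> emeasure lborel {cdf \<nu> t<..cdf \<mu> s}"
    by (rule emeasure_mono) auto
  also have "\<dots> \<le> ennreal (cdf \<mu> s - cdf \<nu> t)"
    by (cases "cdf \<nu> t \<le> cdf \<mu> s") auto
  finally show ?thesis .
qed

lemma quantile_coupling_optimal:
  assumes "\<mu> \<in> P2" "\<nu> \<in> P2" "\<gamma> \<in> couplings \<mu> \<nu>"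
  shows "(\<integral>\<^sup>+u. ennreal ((quantile \<mu> u - quantile \<nu> u)^2) \<partial>unif01)
           \<le> (\<integral>\<^sup>+z. ennreal ((fst z - snd z)^2) \<partial>\<gamma>)"
proof -
  from assms(3) have \<gamma>: "prob_space \<gamma>" "sets \<gamma> = sets (borel \<Otimes>\<^sub>M borel)"
    "distr \<gamma> borel fst = \<mu>" "distr \<gamma> borel snd = \<nu>" by (auto simp: couplings_def)
  have m\<gamma> [measurable]: "fst \<in> borel_measurable \<gamma>" "snd \<in> borel_measurable \<gamma>"
    using \<gamma>(2) by (auto simp: measurable_cong_sets[OF \<gamma>(2) refl])
  have mQ [measurable]: "quantile \<mu> \<in> borel_measurable unif01" "quantile \<nu> \<in> borel_measurable unif01"
    using assms(1,2) by auto
  have "(\<integral>\<^sup>+u. crossing (quantile \<mu> u) (quantile \<nu> u) s t \<partial>unif01)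
          \<le> (\<integral>\<^sup>+z. crossing (fst z) (snd z) s t \<partial>\<gamma>)" for s t
  proof -
    have "emeasure unif01 {u \<in> space unif01. quantile \<mu> u \<le> s \<and> t < quantile \<nu> u}
            \<le> emeasure \<gamma> {z \<in> space \<gamma>. fst z \<le> s \<and> t < snd z}"
      using quantile_crossing_upper[OF assms(1,2)] coupling_crossing_lower[OF \<gamma>(1) _ _ \<gamma>(3,4)]
      by (rule order.trans) measurable
    moreover have "emeasure unif01 {u \<in> space unif01. quantile \<nu> u \<le> s \<and> t < quantile \<mu> u}
            \<le> emeasure \<gamma> {z \<in> space \<gamma>. snd z \<le> s \<and> t < fst z}"
      using quantile_crossing_upper[OF assms(2,1)] coupling_crossing_lower[OF \<gamma>(1) _ _ \<gamma>(4,3)]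
      by (rule order.trans) measurable
    ultimately show ?thesis
      unfolding crossing_mass[OF mQ] crossing_mass[OF m\<gamma>] by (intro add_mono mult_left_mono) simp_all
  qed
  then have "(\<integral>\<^sup>+s. \<integral>\<^sup>+t. \<integral>\<^sup>+u. crossing (quantile \<mu> u) (quantile \<nu> u) s t \<partial>unif01 \<partial>lborel \<partial>lborel)
       \<le> (\<integral>\<^sup>+s. \<integral>\<^sup>+t. \<integral>\<^sup>+z. crossing (fst z) (snd z) s t \<partial>\<gamma> \<partial>lborel \<partial>lborel)"
    by (intro nn_integral_mono)
  moreover have "sigma_finite_measure unif01" "sigma_finite_measure \<gamma>"
    using prob_space_unif01 \<gamma>(1) by (simp_all add: prob_space_imp_sigma_finite)
  ultimately show ?thesis
    by (simp only: expected_square_crossing[OF _ mQ] expected_square_crossing[OF _ m\<gamma>])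
qed

lemma W2sq_le_representation:
  assumes [measurable]: "f \<in> borel_measurable unif01" "g \<in> borel_measurable unif01"
    and laws: "distr unif01 borel f = \<mu>" "distr unif01 borel g = \<nu>"
  shows "W2sq \<mu> \<nu> \<le> (\<integral>\<^sup>+u. ennreal ((f u - g u)^2) \<partial>unif01)"
proof -
  define \<gamma> where "\<gamma> = distr unif01 (borel \<Otimes>\<^sub>M borel) (\<lambda>u. (f u, g u))"
  have "\<gamma> \<in> couplings \<mu> \<nu>"
    unfolding couplings_def \<gamma>_def using laws prob_space_unif01
    by (auto simp: distr_distr comp_def intro: prob_space.prob_space_distr)
  then have "W2sq \<mu> \<nu> \<le> (\<integral>\<^sup>+z. ennreal ((fst z - snd z)^2) \<partial>\<gamma>)"
    unfolding W2sq_def by (rule INF_lower)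
  also have "\<dots> = (\<integral>\<^sup>+u. ennreal ((f u - g u)^2) \<partial>unif01)"
    unfolding \<gamma>_def by (subst nn_integral_distr) auto
  finally show ?thesis .
qed

lemma W2sq_quantile:
  assumes "\<mu> \<in> P2" "\<nu> \<in> P2"
  shows "W2sq \<mu> \<nu> = (\<integral>\<^sup>+u. ennreal ((quantile \<mu> u - quantile \<nu> u)^2) \<partial>unif01)"
proof (rule antisym)
  show "W2sq \<mu> \<nu> \<le> (\<integral>\<^sup>+u. ennreal ((quantile \<mu> u - quantile \<nu> u)^2) \<partial>unif01)"
    using assms by (intro W2sq_le_representation measurable_quantile distr_quantile)
  show "(\<integral>\<^sup>+u. ennreal ((quantile \<mu> u - quantile \<nu> u)^2) \<partial>unif01) \<le> W2sq \<mu> \<nu>"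
    unfolding W2sq_def by (rule INF_greatest) (rule quantile_coupling_optimal[OF assms])
qed

section \<open>Square-integrable functions on the uniform space\<close>

definition sq_integrable :: "(real \<Rightarrow> real) \<Rightarrow> bool" where
  "sq_integrable f \<longleftrightarrow> f \<in> borel_measurable unif01 \<and> integrable unif01 (\<lambda>u. (f u)^2)"

lemma sq_integrable_measurable: "sq_integrable f \<Longrightarrow> f \<in> borel_measurable unif01"
  by (simp add: sq_integrable_def)

lemma sq_integrable_square: "sq_integrable f \<Longrightarrow> integrable unif01 (\<lambda>u. (f u)^2)"
  by (simp add: sq_integrable_def)

lemma sq_integrable_zero: "sq_integrable (\<lambda>u. 0)"
  by (simp add: sq_integrable_def)

lemma sq_integrable_dominated:
  assumes "sq_integrable f" "g \<in> borel_measurable unif01" "AE u in unif01. \<bar>g u\<bar> \<le> \<bar>f u\<bar>"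
  shows "sq_integrable g"
proof -
  have "integrable unif01 (\<lambda>u. (g u)^2)"
  proof (rule Bochner_Integration.integrable_bound[OF sq_integrable_square[OF assms(1)]])
    show "(\<lambda>u. (g u)^2) \<in> borel_measurable unif01" using assms(2) by measurable
    show "AE u in unif01. norm ((g u)^2) \<le> norm ((f u)^2)"
      using assms(3) by eventually_elim (simp add: abs_le_square_iff)
  qed
  then show ?thesis using assms(2) by (simp add: sq_integrable_def)
qed

lemma sq_integrable_add:
  assumes "sq_integrable f" "sq_integrable g"
  shows "sq_integrable (\<lambda>u. f u + g u)"
proof -
  have [measurable]: "f \<in> borel_measurable unif01" "g \<in> borel_measurable unif01"
    using assms by (auto simp: sq_integrable_def)
  have "integrable unif01 (\<lambda>u. (f u + g u)^2)"
  proof (rule Bochner_Integration.integrable_bound)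
    show "integrable unif01 (\<lambda>u. 2 * (f u)^2 + 2 * (g u)^2)"
      using assms by (auto simp: sq_integrable_def)
    show "(\<lambda>u. (f u + g u)^2) \<in> borel_measurable unif01" by measurable
    have "(f u + g u)^2 \<le> 2 * (f u)^2 + 2 * (g u)^2" for u
      using sum_squares_ge_zero[of "f u - g u" 0] by (simp add: power2_eq_square algebra_simps)
    then show "AE u in unif01. norm ((f u + g u)^2) \<le> norm (2 * (f u)^2 + 2 * (g u)^2)"
      by simp
  qed
  then show ?thesis by (simp add: sq_integrable_def)
qed

lemma sq_integrable_cmult: "sq_integrable f \<Longrightarrow> sq_integrable (\<lambda>u. c * f u)"
  by (simp add: sq_integrable_def power_mult_distrib borel_measurable_times)

lemma sq_integrable_diff: "sq_integrable f \<Longrightarrow> sq_integrable g \<Longrightarrow> sq_integrable (\<lambda>u. f u - g u)"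
  using sq_integrable_add[of f "\<lambda>u. (-1) * g u"] sq_integrable_cmult[of g "-1"] by simp

lemma sq_integrable_abs: "sq_integrable f \<Longrightarrow> sq_integrable (\<lambda>u. \<bar>f u\<bar>)"
  by (simp add: sq_integrable_def borel_measurable_abs)

lemma sq_integrable_sum:
  "finite A \<Longrightarrow> (\<And>i. i \<in> A \<Longrightarrow> sq_integrable (f i)) \<Longrightarrow> sq_integrable (\<lambda>u. \<Sum>i\<in>A. f i u)"
  by (induction A rule: finite_induct) (auto simp: sq_integrable_zero sq_integrable_add)

lemma quantile_sq_integrable: "\<mu> \<in> P2 \<Longrightarrow> sq_integrable (quantile \<mu>)"
proof -
  assume \<mu>: "\<mu> \<in> P2"
  have "integrable (distr unif01 borel (quantile \<mu>)) (\<lambda>x. x^2)"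
    using \<mu> by (simp add: distr_quantile P2_def)
  then show ?thesis
    using \<mu> by (simp add: sq_integrable_def integrable_distr_eq)
qed

lemma distr_in_P2: "sq_integrable f \<Longrightarrow> distr unif01 borel f \<in> P2"
  unfolding P2_def sq_integrable_def
  by (auto simp: integrable_distr_eq intro: prob_space.prob_space_distr prob_space_unif01)

lemma wass2_sq_quantile:
  assumes "\<mu> \<in> P2" "\<nu> \<in> P2"
  shows "(wass2 \<mu> \<nu>)^2 = (\<integral>u. (quantile \<mu> u - quantile \<nu> u)^2 \<partial>unif01)"
proof -
  have "sq_integrable (\<lambda>u. quantile \<mu> u - quantile \<nu> u)"
    using assms by (intro sq_integrable_diff quantile_sq_integrable)
  then have "W2sq \<mu> \<nu> = ennreal (\<integral>u. (quantile \<mu> u - quantile \<nu> u)^2 \<partial>unif01)"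
    unfolding W2sq_quantile[OF assms] by (intro nn_integral_eq_integral sq_integrable_square) simp_all
  then show ?thesis by (simp add: wass2_def)
qed

lemma wass2_sq_le_representation:
  assumes "sq_integrable f" "sq_integrable g"
    and "distr unif01 borel f = \<mu>" "distr unif01 borel g = \<nu>"
  shows "(wass2 \<mu> \<nu>)^2 \<le> (\<integral>u. (f u - g u)^2 \<partial>unif01)"
proof -
  have int: "integrable unif01 (\<lambda>u. (f u - g u)^2)"
    using assms(1,2) by (intro sq_integrable_square sq_integrable_diff)
  have "W2sq \<mu> \<nu> \<le> ennreal (\<integral>u. (f u - g u)^2 \<partial>unif01)"
    using W2sq_le_representation[OF assms(1,2)[THEN sq_integrable_measurable] assms(3,4)]
    by (simp add: nn_integral_eq_integral[OF int])
  then have "enn2real (W2sq \<mu> \<nu>) \<le> (\<integral>u. (f u - g u)^2 \<partial>unif01)"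
    by (simp add: enn2real_leI)
  then show ?thesis by (simp add: wass2_def)
qed

section \<open>Barycenters average the quantile functions\<close>

lemma weighted_variance_decomposition:
  fixes w b :: "'i \<Rightarrow> real"
  assumes "(\<Sum>j\<in>A. w j) = 1"
  shows "(\<Sum>j\<in>A. w j * (a - b j)^2)
       = (a - (\<Sum>j\<in>A. w j * b j))^2 + (\<Sum>j\<in>A. w j * ((\<Sum>k\<in>A. w k * b k) - b j)^2)"
proof -
  define c where "c = (\<Sum>k\<in>A. w k * b k)"
  have expand: "w j * (a - b j)^2 = w j * (a - c)^2 + 2 * (a - c) * (w j * (c - b j)) + w j * (c - b j)^2" for j
    by (simp add: power2_eq_square algebra_simps)
  have centred: "(\<Sum>j\<in>A. w j * (c - b j)) = 0"
    using assms by (simp add: right_diff_distrib sum_subtractf sum_distrib_right[symmetric] c_def)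
  have "(\<Sum>j\<in>A. w j * (a - b j)^2) = (\<Sum>j\<in>A. w j * (a - c)^2)
          + 2 * (a - c) * (\<Sum>j\<in>A. w j * (c - b j)) + (\<Sum>j\<in>A. w j * (c - b j)^2)"
    by (simp add: expand sum.distrib sum_distrib_left)
  also have "\<dots> = (a - c)^2 + (\<Sum>j\<in>A. w j * (c - b j)^2)"
    using centred assms by (simp add: sum_distrib_right[symmetric])
  finally show ?thesis unfolding c_def .
qed

lemma weighted_L2_decomposition:
  fixes w :: "'i \<Rightarrow> real"
  assumes "finite A" "(\<Sum>j\<in>A. w j) = 1"
    and f: "sq_integrable f" and g: "\<And>j. j \<in> A \<Longrightarrow> sq_integrable (g j)"
  defines "m \<equiv> \<lambda>u. \<Sum>j\<in>A. w j * g j u"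
  shows "(\<Sum>j\<in>A. w j * (\<integral>u. (f u - g j u)^2 \<partial>unif01))
       = (\<integral>u. (f u - m u)^2 \<partial>unif01) + (\<Sum>j\<in>A. w j * (\<integral>u. (m u - g j u)^2 \<partial>unif01))"
proof -
  have m: "sq_integrable m"
    unfolding m_def using assms(1) g by (intro sq_integrable_sum sq_integrable_cmult) auto
  have int: "integrable unif01 (\<lambda>u. w j * (h u - g j u)^2)"
    if "sq_integrable h" "j \<in> A" for h j
    using that g by (intro integrable_mult_right sq_integrable_square sq_integrable_diff)
  have "(\<Sum>j\<in>A. w j * (\<integral>u. (f u - g j u)^2 \<partial>unif01))
      = (\<integral>u. (\<Sum>j\<in>A. w j * (f u - g j u)^2) \<partial>unif01)"
    using int[OF f] by (simp add: Bochner_Integration.integral_sum)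
  also have "\<dots> = (\<integral>u. (f u - m u)^2 + (\<Sum>j\<in>A. w j * (m u - g j u)^2) \<partial>unif01)"
    unfolding m_def by (intro Bochner_Integration.integral_cong refl weighted_variance_decomposition assms(2))
  also have "\<dots> = (\<integral>u. (f u - m u)^2 \<partial>unif01) + (\<Sum>j\<in>A. w j * (\<integral>u. (m u - g j u)^2 \<partial>unif01))"
    using int[OF m] f m
    by (simp add: Bochner_Integration.integral_add Bochner_Integration.integral_sum
        Bochner_Integration.integrable_sum sq_integrable_square sq_integrable_diff)
  finally show ?thesis .
qed

text \<open>
  A minimiser \<nu> of the weighted barycentric cost has, almost everywhere, the weighted average
  of the quantile functions as its quantile function: by the decomposition above the cost of \<nu>
  exceeds the cost of the measure with averaged quantiles by exactly the L2 distance between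
  the quantile of \<nu> and that average.
\<close>
lemma barycenter_quantile_average:
  fixes w :: "'i \<Rightarrow> real" and \<mu> :: "'i \<Rightarrow> real measure"
  assumes A: "finite A" "(\<Sum>j\<in>A. w j) = 1" "\<And>j. j \<in> A \<Longrightarrow> 0 \<le> w j"
    and \<nu>: "\<nu> \<in> P2" and \<mu>: "\<And>j. j \<in> A \<Longrightarrow> \<mu> j \<in> P2"
    and minimal: "\<And>\<eta>. \<eta> \<in> P2 \<Longrightarrow>
        (\<Sum>j\<in>A. w j * (wass2 \<nu> (\<mu> j))^2) \<le> (\<Sum>j\<in>A. w j * (wass2 \<eta> (\<mu> j))^2)"
  shows "AE u in unif01. quantile \<nu> u = (\<Sum>j\<in>A. w j * quantile (\<mu> j) u)"
proof -
  define m where "m u = (\<Sum>j\<in>A. w j * quantile (\<mu> j) u)" for u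
  have Q\<mu>: "sq_integrable (quantile (\<mu> j))" if "j \<in> A" for j
    using \<mu>[OF that] by (rule quantile_sq_integrable)
  have m: "sq_integrable m"
    unfolding m_def using A(1) Q\<mu> by (intro sq_integrable_sum sq_integrable_cmult) auto
  have Q\<nu>: "sq_integrable (quantile \<nu>)" using \<nu> by (rule quantile_sq_integrable)
  let ?cost = "\<lambda>h. \<Sum>j\<in>A. w j * (\<integral>u. (h u - quantile (\<mu> j) u)^2 \<partial>unif01)"
  have "?cost (quantile \<nu>) = (\<Sum>j\<in>A. w j * (wass2 \<nu> (\<mu> j))^2)"
    using wass2_sq_quantile[OF \<nu> \<mu>] by simp
  also have "\<dots> \<le> (\<Sum>j\<in>A. w j * (wass2 (distr unif01 borel m) (\<mu> j))^2)"
    using m by (intro minimal distr_in_P2)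
  also have "\<dots> \<le> ?cost m"
    using A(3) wass2_sq_le_representation[OF m Q\<mu> refl distr_quantile[OF \<mu>]]
    by (intro sum_mono mult_left_mono) auto
  finally have "?cost (quantile \<nu>) \<le> ?cost m" .
  moreover have "?cost (quantile \<nu>) = (\<integral>u. (quantile \<nu> u - m u)^2 \<partial>unif01) + ?cost m"
    unfolding m_def by (rule weighted_L2_decomposition[OF A(1,2) Q\<nu> Q\<mu>])
  moreover have "0 \<le> (\<integral>u. (quantile \<nu> u - m u)^2 \<partial>unif01)"
    by (rule integral_nonneg_AE) simp
  ultimately have "(\<integral>u. (quantile \<nu> u - m u)^2 \<partial>unif01) = 0"
    by linarith
  then have "AE u in unif01. (quantile \<nu> u - m u)^2 = 0"
    using Q\<nu> m by (subst (asm) integral_nonneg_eq_0_iff_AE)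
      (auto intro: sq_integrable_square sq_integrable_diff)
  then show ?thesis unfolding m_def by eventually_elim simp
qed

section \<open>Linear consensus on a weighted connected graph\<close>

lemma pow_div_le_powr:
  fixes c :: real
  assumes "0 < c" "c \<le> 1" "0 < N"
  shows "c ^ (t div N) \<le> (c powr (1 / real N)) ^ t / c"
proof -
  have "t \<le> t div N * N + N"
    using div_mult_mod_eq[of t N] mod_less_divisor[OF assms(3), of t] by linarith
  then have "real t \<le> (real (t div N) + 1) * real N"
    by (simp add: distrib_right flip: of_nat_mult of_nat_add)
  then have "real t / real N - 1 \<le> real (t div N)"
    using assms(3) by (simp add: field_simps)
  then have "c powr real (t div N) \<le> c powr (real t / real N - 1)"
    using assms(1,2) by (intro powr_mono') auto
  also have "\<dots> = (c powr (1 / real N)) ^ t / c"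
    using assms(1) by (simp add: powr_diff powr_powr powr_realpow[symmetric])
  finally show ?thesis using assms(1) by (simp add: powr_realpow)
qed

lemma periodic_contraction_geometric:
  fixes D :: "nat \<Rightarrow> real"
  assumes "decseq D" "0 < N" "0 < c" "c \<le> 1"
    and nonneg: "\<And>t. 0 \<le> D t" and contract: "\<And>t. D (t + N) \<le> c * D t"
  shows "D t \<le> (c powr (1 / real N)) ^ t / c * D 0"
proof -
  have blocks: "D (q * N) \<le> c ^ q * D 0" for q
  proof (induction q)
    case (Suc q)
    have "D (Suc q * N) \<le> c * D (q * N)"
      using contract[of "q * N"] by (simp add: add.commute)
    also have "\<dots> \<le> c * (c ^ q * D 0)"
      using Suc assms(3) by (intro mult_left_mono) auto
    finally show ?case by simp
  qed simp
  have "D t \<le> D (t div N * N)"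
    using assms(1) by (rule decseqD) (simp add: div_times_less_eq_dividend)
  also have "\<dots> \<le> c ^ (t div N) * D 0"
    by (rule blocks)
  also have "\<dots> \<le> (c powr (1 / real N)) ^ t / c * D 0"
    using pow_div_le_powr[OF assms(3,4,2)] nonneg[of 0] by (rule mult_right_mono)
  finally show ?thesis .
qed

text \<open>
  A finite strongly connected graph with self-loops whose edge weights are bounded below by
  \<delta> > 0 and form a stochastic matrix.
\<close>
locale averaging_graph =
  fixes V :: "'v set" and E :: "('v \<times> 'v) set" and w :: "'v \<Rightarrow> 'v \<Rightarrow> real" and \<delta> :: real
  assumes finite_V: "finite V" and V_nonempty: "V \<noteq> {}" and E_subset: "E \<subseteq> V \<times> V"
    and E_refl: "\<And>i. i \<in> V \<Longrightarrow> (i, i) \<in> E"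
    and E_connected: "\<And>i j. i \<in> V \<Longrightarrow> j \<in> V \<Longrightarrow> (i, j) \<in> E\<^sup>*"
    and weight_lower: "\<And>i j. (i, j) \<in> E \<Longrightarrow> \<delta> \<le> w i j" and \<delta>_pos: "0 < \<delta>"
    and weight_sum: "\<And>i. i \<in> V \<Longrightarrow> (\<Sum>j\<in>{j. (i, j) \<in> E}. w i j) = 1"
begin

definition averaging :: "('v \<Rightarrow> nat \<Rightarrow> real) \<Rightarrow> bool" where
  "averaging x \<longleftrightarrow> (\<forall>i\<in>V. \<forall>t. x i (Suc t) = (\<Sum>j\<in>{j. (i, j) \<in> E}. w i j * x j t))"

lemma finite_neighbours: "finite {j. (i, j) \<in> E}"
  using E_subset finite_V by (auto intro: finite_subset[of _ V])

lemma neighbour_in_V: "(i, j) \<in> E \<Longrightarrow> j \<in> V"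
  using E_subset by auto

lemma weight_nonneg: "(i, j) \<in> E \<Longrightarrow> 0 \<le> w i j"
  using weight_lower \<delta>_pos by (meson less_le_trans less_imp_le)

lemma averaging_uminus: "averaging x \<Longrightarrow> averaging (\<lambda>i t. - x i t)"
  unfolding averaging_def by (simp add: sum_negf)

lemma averaging_upper_bound:
  assumes "averaging x" "i \<in> V" "\<forall>l\<in>V. x l t \<le> U"
  shows "x i (Suc t) \<le> U"
proof -
  have "x i (Suc t) = (\<Sum>j\<in>{j. (i, j) \<in> E}. w i j * x j t)"
    using assms unfolding averaging_def by auto
  also have "\<dots> \<le> (\<Sum>j\<in>{j. (i, j) \<in> E}. w i j * U)"
    using assms(3) neighbour_in_V weight_nonneg by (intro sum_mono mult_left_mono) auto
  also have "\<dots> = U" using weight_sum[OF assms(2)] by (simp add: sum_distrib_right[symmetric])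
  finally show ?thesis .
qed

lemma upper_bound_persists:
  assumes "averaging x" "\<forall>l\<in>V. x l t \<le> U"
  shows "\<forall>l\<in>V. x l (t + s) \<le> U"
  by (induction s) (use assms averaging_upper_bound[OF assms(1)] in auto)

lemma walk_bound:
  assumes "averaging x" "\<forall>l\<in>V. x l t \<le> U" "k \<in> V"
  shows "(i, k) \<in> E ^^ s \<Longrightarrow> x i (t + s) \<le> (1 - \<delta>^s) * U + \<delta>^s * x k t"
proof (induction s arbitrary: i)
  case (Suc s)
  from relpow_Suc_D2[OF Suc.prems] obtain j where ij: "(i, j) \<in> E" and jk: "(j, k) \<in> E ^^ s"
    by blast
  have iV: "i \<in> V" using ij E_subset by auto
  let ?N = "{j. (i, j) \<in> E}"
  have bound: "\<forall>l\<in>V. x l (t + s) \<le> U" using upper_bound_persists[OF assms(1,2)] by blast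
  have "x i (t + Suc s) = w i j * x j (t + s) + (\<Sum>l\<in>?N - {j}. w i l * x l (t + s))"
    using assms(1) iV finite_neighbours ij unfolding averaging_def by (simp add: sum.remove)
  also have "\<dots> \<le> w i j * ((1 - \<delta>^s) * U + \<delta>^s * x k t) + (\<Sum>l\<in>?N - {j}. w i l * U)"
    using Suc.IH[OF jk] weight_nonneg[OF ij] bound neighbour_in_V weight_nonneg
    by (intro add_mono mult_left_mono sum_mono) auto
  also have "(\<Sum>l\<in>?N - {j}. w i l * U) = (1 - w i j) * U"
    using weight_sum[OF iV] finite_neighbours ij
    by (simp add: sum.remove sum_distrib_right[symmetric])
  also have "w i j * ((1 - \<delta>^s) * U + \<delta>^s * x k t) + (1 - w i j) * U
      = U - w i j * \<delta>^s * (U - x k t)" by (simp add: algebra_simps)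
  also have "\<dots> \<le> U - \<delta> * \<delta>^s * (U - x k t)"
    using assms(2,3) weight_lower[OF ij] \<delta>_pos by (intro diff_left_mono mult_right_mono) auto
  also have "\<dots> = (1 - \<delta>^Suc s) * U + \<delta>^Suc s * x k t" by (simp add: algebra_simps)
  finally show ?case .
qed simp

text \<open>Thanks to the self-loops, one common walk length N works for all pairs of agents.\<close>
lemma uniform_walk_length: "\<exists>N>0. \<forall>i\<in>V. \<forall>k\<in>V. (i, k) \<in> E ^^ N"
proof -
  have extend: "(i, k) \<in> E ^^ s \<Longrightarrow> k \<in> V \<Longrightarrow> (i, k) \<in> E ^^ (s + d)" for i k s d
    by (induction d) (auto intro: relpow_Suc_I E_refl)
  have "\<forall>p\<in>V \<times> V. \<exists>s. p \<in> E ^^ s" using E_connected rtrancl_power by blast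
  then obtain S where S: "\<forall>p\<in>V \<times> V. p \<in> E ^^ S p" by metis
  define N where "N = Suc (Max (S ` (V \<times> V)))"
  have "(i, k) \<in> E ^^ N" if "i \<in> V" "k \<in> V" for i k
  proof -
    have "S (i, k) \<le> Max (S ` (V \<times> V))" using finite_V that by (intro Max_ge) auto
    then obtain d where "N = S (i, k) + d" unfolding N_def using le_Suc_ex le_SucI by blast
    then show ?thesis using extend S that by auto
  qed
  then show ?thesis unfolding N_def by blast
qed

definition vmax :: "('v \<Rightarrow> nat \<Rightarrow> real) \<Rightarrow> nat \<Rightarrow> real" where
  "vmax x t = Max ((\<lambda>i. x i t) ` V)"

definition vmin :: "('v \<Rightarrow> nat \<Rightarrow> real) \<Rightarrow> nat \<Rightarrow> real" where
  "vmin x t = - vmax (\<lambda>i t. - x i t) t"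

definition spread :: "('v \<Rightarrow> nat \<Rightarrow> real) \<Rightarrow> nat \<Rightarrow> real" where
  "spread x t = vmax x t - vmin x t"

lemma vmax_le_iff: "vmax x t \<le> U \<longleftrightarrow> (\<forall>i\<in>V. x i t \<le> U)"
  using finite_V V_nonempty by (simp add: vmax_def)

lemma le_vmax: "i \<in> V \<Longrightarrow> x i t \<le> vmax x t"
  using vmax_le_iff by blast

lemma vmax_attained: "\<exists>k\<in>V. x k t = vmax x t"
proof -
  have "vmax x t \<in> (\<lambda>i. x i t) ` V"
    unfolding vmax_def using finite_V V_nonempty by (intro Max_in) auto
  then show ?thesis by auto
qed

lemma vmin_le: "i \<in> V \<Longrightarrow> vmin x t \<le> x i t"
  using le_vmax[of i "\<lambda>i t. - x i t" t] by (simp add: vmin_def)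

lemma vmin_attained: "\<exists>k\<in>V. x k t = vmin x t"
proof -
  obtain k where "k \<in> V" "- x k t = vmax (\<lambda>i t. - x i t) t"
    using vmax_attained[of "\<lambda>i t. - x i t" t] by blast
  then show ?thesis unfolding vmin_def by (metis minus_minus)
qed

lemma vmax_uminus: "vmax (\<lambda>i t. - x i t) t = - vmin x t"
  by (simp add: vmin_def)

lemma vmin_uminus: "vmin (\<lambda>i t. - x i t) t = - vmax x t"
  by (simp add: vmin_def)

lemma spread_nonneg: "0 \<le> spread x t"
  using V_nonempty le_vmax vmin_le unfolding spread_def by (meson diff_ge_0_iff_ge ex_in_conv order_trans)

lemma vmax_decseq: "averaging x \<Longrightarrow> decseq (vmax x)"
  by (intro decseq_SucI) (simp add: vmax_le_iff averaging_upper_bound le_vmax)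

lemma vmin_incseq: "averaging x \<Longrightarrow> incseq (vmin x)"
  using vmax_decseq[OF averaging_uminus] by (simp add: vmin_def decseq_def incseq_def)

lemma spread_decseq: "averaging x \<Longrightarrow> decseq (spread x)"
  using vmax_decseq vmin_incseq unfolding spread_def decseq_def incseq_def
  by (meson diff_mono)

lemma spread_le_sum_abs: "spread x t \<le> 2 * (\<Sum>j\<in>V. \<bar>x j t\<bar>)"
proof -
  have "\<bar>x k t\<bar> \<le> (\<Sum>j\<in>V. \<bar>x j t\<bar>)" if "k \<in> V" for k
    using finite_V that by (intro member_le_sum) auto
  moreover obtain k k' where "k \<in> V" "x k t = vmax x t" "k' \<in> V" "x k' t = vmin x t"
    using vmax_attained vmin_attained by metis
  ultimately show ?thesis
    unfolding spread_def by (smt (verit))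
qed

lemma vmax_after_walks:
  assumes "averaging x" "\<forall>i\<in>V. \<forall>k\<in>V. (i, k) \<in> E ^^ N"
  shows "vmax x (t + N) \<le> (1 - \<delta>^N) * vmax x t + \<delta>^N * vmin x t"
proof -
  obtain k where k: "k \<in> V" "x k t = vmin x t" using vmin_attained by blast
  show ?thesis
    unfolding vmax_le_iff
    using walk_bound[OF assms(1) _ k(1), of t "vmax x t"] assms(2) k le_vmax by auto
qed

lemma spread_contraction:
  assumes "averaging x" "\<forall>i\<in>V. \<forall>k\<in>V. (i, k) \<in> E ^^ N"
  shows "spread x (t + N) \<le> (1 - 2 * \<delta>^N) * spread x t"
  using vmax_after_walks[OF assms, of t] vmax_after_walks[OF averaging_uminus[OF assms(1)] assms(2), of t]
  unfolding spread_def vmax_uminus vmin_uminus by (simp add: algebra_simps)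

lemma consensus_limit:
  assumes x: "averaging x" and spread: "spread x \<longlonglongrightarrow> 0" and "i0 \<in> V" "i \<in> V"
  shows "\<bar>x i t - lim (\<lambda>t. x i0 t)\<bar> \<le> spread x t"
proof -
  have below: "vmin x s \<le> vmax x t" for s t
  proof -
    have "vmin x s \<le> vmin x (max s t)" using vmin_incseq[OF x] by (simp add: incseqD)
    also have "\<dots> \<le> x i0 (max s t)" using \<open>i0 \<in> V\<close> by (rule vmin_le)
    also have "\<dots> \<le> vmax x (max s t)" using \<open>i0 \<in> V\<close> by (rule le_vmax)
    also have "\<dots> \<le> vmax x t" using vmax_decseq[OF x] by (simp add: decseqD)
    finally show ?thesis .
  qed
  obtain L where L: "vmax x \<longlonglongrightarrow> L"
    using decseq_convergent[OF vmax_decseq[OF x], of "vmin x 0"] below by metis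
  have L_le_vmax: "L \<le> vmax x t" for t
    using vmax_decseq[OF x] L by (rule decseq_ge)
  have vmin_le_L: "vmin x t \<le> L" for t
    using L by (rule LIMSEQ_le_const) (use below in blast)
  have "(\<lambda>t. vmax x t - spread x t) \<longlonglongrightarrow> L - 0"
    using L spread by (rule tendsto_diff)
  then have vmin_L: "vmin x \<longlonglongrightarrow> L"
    by (simp add: spread_def)
  have "(\<lambda>t. x i0 t) \<longlonglongrightarrow> L"
  proof (rule tendsto_sandwich[OF _ _ vmin_L L])
    show "\<forall>\<^sub>F t in sequentially. vmin x t \<le> x i0 t" using vmin_le \<open>i0 \<in> V\<close> by simp
    show "\<forall>\<^sub>F t in sequentially. x i0 t \<le> vmax x t" using le_vmax \<open>i0 \<in> V\<close> by simp
  qed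
  then have "lim (\<lambda>t. x i0 t) = L" by (rule limI)
  moreover have "vmin x t \<le> x i t" "x i t \<le> vmax x t"
    using \<open>i \<in> V\<close> by (rule vmin_le, rule le_vmax)
  ultimately show ?thesis
    using vmin_le_L[of t] L_le_vmax[of t] unfolding spread_def by (simp add: abs_le_iff)
qed

theorem consensus_rate:
  "\<exists>K>0. \<exists>\<rho>. 0 < \<rho> \<and> \<rho> < 1 \<and> (\<forall>x. averaging x \<longrightarrow> (\<forall>i0\<in>V. \<forall>i\<in>V. \<forall>t.
       \<bar>x i t - lim (\<lambda>t. x i0 t)\<bar> \<le> K * \<rho>^t * (\<Sum>j\<in>V. \<bar>x j 0\<bar>)))"
proof -
  obtain N where N: "N > 0" "\<forall>i\<in>V. \<forall>k\<in>V. (i, k) \<in> E ^^ N"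
    using uniform_walk_length by blast
  txt \<open>The contraction factor per block; capping it below by 1/2 keeps 1/c bounded.\<close>
  define c where "c = max (1 - \<delta>^N) (1/2)"
  define \<rho> where "\<rho> = c powr (1 / real N)"
  have c: "0 < c" "c \<le> 1" "c < 1" unfolding c_def using \<delta>_pos by auto
  have \<rho>: "0 < \<rho>" "\<rho> < 1"
    unfolding \<rho>_def using c N(1) powr_less_mono2[of "1 / real N" c 1] by auto
  have decay: "\<bar>x i t - lim (\<lambda>t. x i0 t)\<bar> \<le> 2 / c * \<rho>^t * (\<Sum>j\<in>V. \<bar>x j 0\<bar>)"
    if x: "averaging x" and "i0 \<in> V" "i \<in> V" for x i0 i t
  proof -
    have "1 - 2 * \<delta>^N \<le> c" unfolding c_def using zero_less_power[OF \<delta>_pos, of N] by linarith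
    then have contract: "spread x (s + N) \<le> c * spread x s" for s
      using spread_contraction[OF x N(2), of s] mult_right_mono[OF _ spread_nonneg[of x s]] by fastforce
    have geometric: "spread x s \<le> \<rho>^s / c * spread x 0" for s
      unfolding \<rho>_def
      using spread_decseq[OF x] N(1) c(1,2) spread_nonneg contract by (rule periodic_contraction_geometric)
    have "spread x \<longlonglongrightarrow> 0"
    proof (rule tendsto_sandwich[OF _ _ tendsto_const])
      show "(\<lambda>s. \<rho>^s / c * spread x 0) \<longlonglongrightarrow> 0"
        using \<rho> by (intro tendsto_mult_left_zero tendsto_divide_zero LIMSEQ_power_zero) auto
    qed (use geometric spread_nonneg in auto)
    then have "\<bar>x i t - lim (\<lambda>t. x i0 t)\<bar> \<le> spread x t"
      using consensus_limit x that(2,3) by blast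
    also have "\<dots> \<le> \<rho>^t / c * (2 * (\<Sum>j\<in>V. \<bar>x j 0\<bar>))"
      using geometric[of t] spread_le_sum_abs[of x 0] \<rho>(1) c(1)
      by (meson order.trans mult_left_mono divide_nonneg_pos zero_le_power less_imp_le)
    finally show ?thesis by (simp add: mult.left_commute)
  qed
  show ?thesis
    using c(1) \<rho> decay by (intro exI[of _ "2 / c"] exI[of _ \<rho>]) auto
qed

end

section \<open>Exponential convergence of the barycentric dynamics\<close>

context averaging_graph
begin

lemma L2_consensus:
  assumes sq: "\<And>i t. i \<in> V \<Longrightarrow> sq_integrable (q i t)"
    and avg: "AE u in unif01. averaging (\<lambda>i t. q i t u)"
  obtains L C \<rho> where "sq_integrable L" "0 < C" "0 < \<rho>" "\<rho> < 1"
    "\<And>i t. i \<in> V \<Longrightarrow> sqrt (\<integral>u. (q i t u - L u)^2 \<partial>unif01) \<le> C * \<rho>^t"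
proof -
  obtain K \<rho> where K: "K > 0" and \<rho>: "0 < \<rho>" "\<rho> < 1"
    and rate: "\<And>x i0 i t. averaging x \<Longrightarrow> i0 \<in> V \<Longrightarrow> i \<in> V \<Longrightarrow>
       \<bar>x i t - lim (\<lambda>t. x i0 t)\<bar> \<le> K * \<rho>^t * (\<Sum>j\<in>V. \<bar>x j 0\<bar>)"
    using consensus_rate by blast
  obtain i0 where i0: "i0 \<in> V" using V_nonempty by blast
  define L where "L u = lim (\<lambda>t. q i0 t u)" for u
  define B where "B u = (\<Sum>j\<in>V. \<bar>q j 0 u\<bar>)" for u
  have pointwise: "AE u in unif01. \<forall>i\<in>V. \<forall>t. \<bar>q i t u - L u\<bar> \<le> K * \<rho>^t * B u"
    using avg by eventually_elim (auto simp: L_def B_def intro: rate i0)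
  have B: "sq_integrable B"
    unfolding B_def using finite_V sq by (intro sq_integrable_sum sq_integrable_abs) auto
  have L: "sq_integrable L"
  proof (rule sq_integrable_dominated)
    show "sq_integrable (\<lambda>u. \<bar>q i0 0 u\<bar> + K * B u)"
      using sq[OF i0] B by (intro sq_integrable_add sq_integrable_abs sq_integrable_cmult)
    show "L \<in> borel_measurable unif01"
      unfolding L_def using sq_integrable_measurable[OF sq[OF i0]]
      by (rule borel_measurable_lim_metric)
    have B_nonneg: "0 \<le> B u" for u unfolding B_def by (simp add: sum_nonneg)
    show "AE u in unif01. \<bar>L u\<bar> \<le> \<bar>\<bar>q i0 0 u\<bar> + K * B u\<bar>"
      using pointwise
    proof eventually_elim
      case (elim u)
      then have "\<bar>q i0 0 u - L u\<bar> \<le> K * \<rho>^0 * B u" using i0 by blast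
      then show ?case using B_nonneg[of u] K by (simp add: abs_le_iff) linarith
    qed
  qed
  define C where "C = K * sqrt (\<integral>u. (B u)^2 \<partial>unif01) + 1"
  have "0 \<le> (\<integral>u. (B u)^2 \<partial>unif01)" by (rule integral_nonneg_AE) simp
  then have C: "0 < C" unfolding C_def using K by (intro add_nonneg_pos mult_nonneg_nonneg) auto
  have "sqrt (\<integral>u. (q i t u - L u)^2 \<partial>unif01) \<le> C * \<rho>^t" if i: "i \<in> V" for i t
  proof -
    have "(\<integral>u. (q i t u - L u)^2 \<partial>unif01) \<le> (\<integral>u. (K * \<rho>^t)^2 * (B u)^2 \<partial>unif01)"
    proof (rule integral_mono_AE)
      show "integrable unif01 (\<lambda>u. (q i t u - L u)^2)"
        using sq[OF i] L by (intro sq_integrable_square sq_integrable_diff)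
      show "integrable unif01 (\<lambda>u. (K * \<rho>^t)^2 * (B u)^2)"
        using B by (intro integrable_mult_right sq_integrable_square)
      show "AE u in unif01. (q i t u - L u)^2 \<le> (K * \<rho>^t)^2 * (B u)^2"
        using pointwise
      proof eventually_elim
        case (elim u)
        then have "\<bar>q i t u - L u\<bar>^2 \<le> (K * \<rho>^t * B u)^2" using i by (intro power_mono) auto
        then show ?case by (simp add: power_mult_distrib)
      qed
    qed
    then have "sqrt (\<integral>u. (q i t u - L u)^2 \<partial>unif01) \<le> sqrt ((K * \<rho>^t)^2 * (\<integral>u. (B u)^2 \<partial>unif01))"
      by simp
    also have "\<dots> = K * \<rho>^t * sqrt (\<integral>u. (B u)^2 \<partial>unif01)"
      using K \<rho> by (simp add: real_sqrt_mult)
    also have "\<dots> \<le> C * \<rho>^t"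
      unfolding C_def using \<rho> by (simp add: algebra_simps)
    finally show ?thesis .
  qed
  then show ?thesis using that L C \<rho> by blast
qed

theorem barycentric_dynamics_converge:
  assumes P2: "\<And>i t. i \<in> V \<Longrightarrow> \<mu> i t \<in> P2"
    and minimal: "\<And>i t \<eta>. i \<in> V \<Longrightarrow> \<eta> \<in> P2 \<Longrightarrow>
        (\<Sum>j\<in>{j. (i, j) \<in> E}. w i j * (wass2 (\<mu> i (Suc t)) (\<mu> j t))\<^sup>2)
          \<le> (\<Sum>j\<in>{j. (i, j) \<in> E}. w i j * (wass2 \<eta> (\<mu> j t))\<^sup>2)"
  shows "\<exists>\<mu>s\<in>P2. \<exists>C>0. \<exists>\<rho>. 0 < \<rho> \<and> \<rho> < 1 \<and> (\<forall>i\<in>V. \<forall>t. wass2 (\<mu> i t) \<mu>s \<le> C * \<rho> ^ t)"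
proof -
  define q where "q i t = quantile (\<mu> i t)" for i t
  have sq: "sq_integrable (q i t)" if "i \<in> V" for i t
    unfolding q_def using P2[OF that] by (rule quantile_sq_integrable)
  have "AE u in unif01. q i (Suc t) u = (\<Sum>j\<in>{j. (i, j) \<in> E}. w i j * q j t u)"
    if i: "i \<in> V" for i t
    unfolding q_def using finite_neighbours weight_sum[OF i] weight_nonneg P2 neighbour_in_V
    by (intro barycenter_quantile_average P2[OF i] minimal[OF i]) auto
  txt \<open>Finitely many agents and countably many times: one null set serves all updates.\<close>
  then have avg: "AE u in unif01. averaging (\<lambda>i t. q i t u)"
    unfolding averaging_def by (intro AE_finite_allI[OF finite_V]) (simp add: AE_all_countable)
  obtain L C \<rho> where L: "sq_integrable L" and C: "0 < C" and \<rho>: "0 < \<rho>" "\<rho> < 1"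
    and rate: "\<And>i t. i \<in> V \<Longrightarrow> sqrt (\<integral>u. (q i t u - L u)^2 \<partial>unif01) \<le> C * \<rho>^t"
    using L2_consensus[of q, OF sq avg] by blast
  have "wass2 (\<mu> i t) (distr unif01 borel L) \<le> C * \<rho>^t" if i: "i \<in> V" for i t
  proof -
    have "(wass2 (\<mu> i t) (distr unif01 borel L))^2 \<le> (\<integral>u. (q i t u - L u)^2 \<partial>unif01)"
      using sq[OF i] L unfolding q_def
      by (rule wass2_sq_le_representation) (simp_all add: distr_quantile P2[OF i])
    then have "wass2 (\<mu> i t) (distr unif01 borel L) \<le> sqrt (\<integral>u. (q i t u - L u)^2 \<partial>unif01)"
      by (simp add: real_le_rsqrt)
    then show ?thesis using rate[OF i, of t] by linarith
  qed
  then show ?thesis using distr_in_P2[OF L] C \<rho> by blast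
qed

end

lemma averaging_graph_of_stochastic_weights:
  assumes "finite V" "V \<noteq> {}" "E \<subseteq> V \<times> V" "\<And>i. i \<in> V \<Longrightarrow> (i, i) \<in> E"
    and "\<And>i j. i \<in> V \<Longrightarrow> j \<in> V \<Longrightarrow> (i, j) \<in> E\<^sup>*"
    and pos: "\<And>i j. (i, j) \<in> E \<Longrightarrow> 0 < w i j"
    and zero: "\<And>i j. i \<in> V \<Longrightarrow> j \<in> V \<Longrightarrow> (i, j) \<notin> E \<Longrightarrow> w i j = 0"
    and stochastic: "\<And>i. i \<in> V \<Longrightarrow> (\<Sum>j\<in>V. w i j) = 1"
  shows "averaging_graph V E w (Min ((\<lambda>(i, j). w i j) ` E))"
proof
  have finE: "finite E" using assms(1,3) by (meson finite_SigmaI finite_subset)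
  have "E \<noteq> {}" using assms(2,4) by blast
  then show "0 < Min ((\<lambda>(i, j). w i j) ` E)"
    using finE pos by (subst Min_gr_iff) auto
  show "Min ((\<lambda>(i, j). w i j) ` E) \<le> w i j" if "(i, j) \<in> E" for i j
    using finE that by (intro Min_le) force+
  show "(\<Sum>j\<in>{j. (i, j) \<in> E}. w i j) = 1" if i: "i \<in> V" for i
  proof -
    have "(\<Sum>j\<in>{j. (i, j) \<in> E}. w i j) = (\<Sum>j\<in>V. w i j)"
      using assms(1,3) zero i by (intro sum.mono_neutral_left) auto
    then show ?thesis using stochastic[OF i] by simp
  qed
qed (use assms in auto)

theorem proposition3:
  fixes n :: nat
    and E :: "(nat \<times> nat) set"
    and w :: "nat \<Rightarrow> nat \<Rightarrow> real"
    and \<mu> :: "nat \<Rightarrow> nat \<Rightarrow> real measure"  (* \<mu> i t *)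
  assumes E_sub: "E \<subseteq> {1..n} \<times> {1..n}"
    and E_sym: "\<And>i j. (i, j) \<in> E \<Longrightarrow> (j, i) \<in> E"
    and E_refl: "\<And>i. i \<in> {1..n} \<Longrightarrow> (i, i) \<in> E"
    and connected: "\<And>i j. i \<in> {1..n} \<Longrightarrow> j \<in> {1..n} \<Longrightarrow> (i, j) \<in> E\<^sup>*"
    and w_pos: "\<And>i j. i \<in> {1..n} \<Longrightarrow> j \<in> {1..n} \<Longrightarrow> (w i j > 0 \<longleftrightarrow> (i, j) \<in> E)"
    and w_zero: "\<And>i j. i \<in> {1..n} \<Longrightarrow> j \<in> {1..n} \<Longrightarrow> (i, j) \<notin> E \<Longrightarrow> w i j = 0"
    and w_sum: "\<And>i. i \<in> {1..n} \<Longrightarrow> (\<Sum>j\<in>{1..n}. w i j) = 1"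
    and w_diag: "\<And>i. i \<in> {1..n} \<Longrightarrow> w i i > 0"
    and init: "\<And>i. i \<in> {1..n} \<Longrightarrow> \<mu> i 0 \<in> P2"
    and upd_in: "\<And>i t. i \<in> {1..n} \<Longrightarrow> \<mu> i (Suc t) \<in> P2"
    and upd_min: "\<And>i t \<eta>. i \<in> {1..n} \<Longrightarrow> \<eta> \<in> P2 \<Longrightarrow>
        (\<Sum>j\<in>{j. (i, j) \<in> E}. w i j * (wass2 (\<mu> i (Suc t)) (\<mu> j t))\<^sup>2)
          \<le> (\<Sum>j\<in>{j. (i, j) \<in> E}. w i j * (wass2 \<eta> (\<mu> j t))\<^sup>2)"
  shows "\<exists>\<mu>s\<in>P2. \<exists>C>0. \<exists>\<rho>. 0 < \<rho> \<and> \<rho> < 1 \<and>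
           (\<forall>i\<in>{1..n}. \<forall>t. wass2 (\<mu> i t) \<mu>s \<le> C * \<rho> ^ t)"
proof (cases "n = 0")
  case True
  then show ?thesis
    by (intro bexI[OF _ distr_in_P2[OF sq_integrable_zero]] exI[of _ 1] conjI exI[of _ "1/2"]) auto
next
  case False
  have "(i, j) \<in> E \<Longrightarrow> 0 < w i j" for i j
    using E_sub w_pos by blast
  then interpret averaging_graph "{1..n}" E w "Min ((\<lambda>(i, j). w i j) ` E)"
    using False E_sub E_refl connected w_zero w_sum
    by (intro averaging_graph_of_stochastic_weights) auto
  have "\<mu> i t \<in> P2" if "i \<in> {1..n}" for i t
    using that init upd_in by (cases t) auto
  then show ?thesis
    using upd_min by (rule barycentric_dynamics_converge)
qed

end
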